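(* Fix $a>0$. Let $f\in C^\infty(\mathbb{T})$ be even and nonnegative with $f(0)=0$ and $f'\ge 0$ on $[0,\pi)$. Then for all $0<x\le \pi/2$, \[ H_a f(x) \le \int_0^{2x} f'(y)\,G_a(x,y)\,dy, \] where \[ G_a(x,y) := \frac{1}{2\pi}\log\left(\frac{1+\frac{a^2}{x^2}}{1+\frac{a^2}{(x-y)^2}}\cdot\frac{1+\frac{a^2}{(2\pi-x)^2}}{1+\frac{a^2}{(x-y+2\pi\,\mathrm{sgn}(y-x))^2}}\right). \]
   Context: $\mathbb{T}=[-\pi,\pi)$ is the circle; functions on $\mathbb{T}$ are identified with $2\pi$-periodic functions on $\mathbb{R}$, and $C^\infty(\mathbb{T})$ denotes smooth $2\pi$-periodic functions with all derivatives bounded. For $a>0$, $H_a f(x) := \mathrm{P.V.}\int_{\mathbb{R}} f(x-y)K_a(y)\,dy$ with $K_a(y) := \frac{a^2}{\pi y(y^2+a^2)}$, applied to the periodic extension of $f$. *)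

theory Defs
  imports "HOL-Analysis.Analysis"
begin

definition smooth_fun :: "(real \<Rightarrow> real) \<Rightarrow> bool" where
  "smooth_fun f \<longleftrightarrow> (\<forall>n x. ((deriv ^^ n) f) differentiable (at x))"

definition smooth_periodic :: "(real \<Rightarrow> real) \<Rightarrow> bool" where
  "smooth_periodic f \<longleftrightarrow> smooth_fun f \<and> (\<forall>x. f (x + 2 * pi) = f x)
     \<and> (\<forall>n. bounded (range ((deriv ^^ n) f)))"

definition K :: "real \<Rightarrow> real \<Rightarrow> real" where
  "K a y = a\<^sup>2 / (pi * y * (y\<^sup>2 + a\<^sup>2))"

definition PV_integral :: "(real \<Rightarrow> real) \<Rightarrow> real" where
  "PV_integral g = Lim (at_right 0) (\<lambda>\<epsilon>. integral {y. \<epsilon> \<le> \<bar>y\<bar>} g)"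

definition H :: "real \<Rightarrow> (real \<Rightarrow> real) \<Rightarrow> real \<Rightarrow> real" where
  "H a f x = PV_integral (\<lambda>y. f (x - y) * K a y)"

definition G :: "real \<Rightarrow> real \<Rightarrow> real \<Rightarrow> real" where
  "G a x y = (1 / (2 * pi)) * ln (
      ((1 + a\<^sup>2 / x\<^sup>2) / (1 + a\<^sup>2 / (x - y)\<^sup>2)) *
      ((1 + a\<^sup>2 / (2 * pi - x)\<^sup>2) / (1 + a\<^sup>2 / (x - y + 2 * pi * sgn (y - x))\<^sup>2)))"

end

(*
  Since K_a is odd, H_a f(x) is the absolutely convergent integral over (0, infinity) of
  F(s) K_a(s), where F(s) = f(x - s) - f(x + s). Evenness, 2 pi-periodicity and monotonicity of
  f on [0, pi] make F 2 pi-periodic, odd about pi and nonpositive on [0, pi]. Pairing s with its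
  mirror image in the middle of each window [2 pi n + c, 2 pi n + 2 pi - c] and using that K_a
  decreases on (0, infinity), every such window contributes a nonpositive amount; what remains
  is the integral of F(s) (K_a(s) - K_a(2 pi - s)) over [0, x].

  On the other side, G_a(x, y) depends only on s = |x - y|; as a function of s it vanishes at
  s = x and has derivative K_a(s) - K_a(2 pi - s). Folding [0, 2x] about x and integrating by
  parts on [d, x] produces the same integral up to a boundary term of size O(d log d), and since
  f' G_a <= 0 on [0, 2x], monotone convergence lets d tend to 0.
*)

theory Submission
  imports Defs "HOL-Real_Asymp.Real_Asymp"
begin

section \<open>Integrals over half-lines and punctured intervals\<close>

lemma integral_reflect_shift_real:
  fixes g :: "real \<Rightarrow> real"
  shows "integral {a..b} (\<lambda>t. g (c - t)) = integral {c - b..c - a} g"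
proof -
  have "integral {c - b..c - a} g = integral {-b..-a} (\<lambda>u. g (u + c))"
    using integral_shift_real_ivl[of "c - b" c "c - a" g] by simp
  also have "\<dots> = integral {a..b} (\<lambda>t. g (c - t))"
    using Henstock_Kurzweil_Integration.integral_reflect_real[of b a "\<lambda>t. g (c - t)"] by (simp add: add.commute)
  finally show ?thesis ..
qed

lemma absolutely_integrable_on_Icc_if_continuous_bounded_on_Ioc:
  fixes g :: "real \<Rightarrow> real"
  assumes cont: "continuous_on {a<..b} g" and bound: "\<And>s. s \<in> {a<..b} \<Longrightarrow> \<bar>g s\<bar> \<le> B"
  shows "g absolutely_integrable_on {a..b}"
proof -
  have "g absolutely_integrable_on {a<..b}"
  proof (rule measurable_bounded_by_integrable_imp_absolutely_integrable)
    show "g \<in> borel_measurable (lebesgue_on {a<..b})"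
      by (rule continuous_imp_measurable_on_sets_lebesgue[OF cont]) auto
    show "(\<lambda>s. B) integrable_on {a<..b}"
      by (rule integrable_spike_set[OF integrable_const_ivl[of B a b]]) (auto intro: negligible_subset[of "{a}"])
  qed (use bound in auto)
  then show ?thesis
    by (rule absolutely_integrable_spike_set) (auto intro: negligible_subset[of "{a}"])
qed

lemma tendsto_integral_atLeastAtMost_at_top:
  fixes g :: "real \<Rightarrow> real"
  assumes "g absolutely_integrable_on {a..}"
  shows "((\<lambda>b. integral {a..b} g) \<longlongrightarrow> integral {a..} g) at_top"
proof -
  have "((\<lambda>b. set_lebesgue_integral lebesgue {a..b} g)
      \<longlongrightarrow> set_lebesgue_integral lebesgue {a..} g) at_top"
    using assms by (intro tendsto_set_lebesgue_integral_at_top) auto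
  moreover have "set_lebesgue_integral lebesgue {a..b} g = integral {a..b} g" for b
  proof (cases "a \<le> b")
    case True
    then show ?thesis
      using set_integrable_subset[OF assms, of "{a..b}"] by (auto intro: set_lebesgue_integral_eq_integral)
  qed (simp add: set_lebesgue_integral_def)
  ultimately show ?thesis
    using set_lebesgue_integral_eq_integral(2)[OF assms] by simp
qed

lemma tendsto_integral_Icc_upper_limit_0:
  fixes h :: "real \<Rightarrow> real"
  assumes "h integrable_on {0..b}" "0 < b"
  shows "((\<lambda>\<epsilon>. integral {0..\<epsilon>} h) \<longlongrightarrow> 0) (at_right 0)"
proof -
  have "continuous (at 0 within {0..b}) (\<lambda>\<epsilon>. integral {0..\<epsilon>} h)"
    using indefinite_integral_continuous_1[OF assms(1)] assms(2) by (simp add: continuous_on_eq_continuous_within)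
  then show ?thesis
    using assms(2) by (simp add: continuous_within at_within_Icc_at_right)
qed

lemma tendsto_integral_Icc_lower_limit:
  fixes h :: "real \<Rightarrow> real"
  assumes "h integrable_on {a..b}" "a < b"
  shows "((\<lambda>d. integral {d..b} h) \<longlongrightarrow> integral {a..b} h) (at_right a)"
proof -
  have "continuous (at a within {a..b}) (\<lambda>d. integral {d..b} h)"
    using indefinite_integral_continuous_1'[OF assms(1)] assms(2)
    by (simp add: continuous_on_eq_continuous_within)
  then show ?thesis
    using assms(2) by (simp add: continuous_within at_within_Icc_at_right)
qed

lemma PV_integral_eq_integral_symmetrized:
  fixes g :: "real \<Rightarrow> real"
  assumes right: "\<And>\<epsilon>. \<epsilon> > 0 \<Longrightarrow> g absolutely_integrable_on {\<epsilon>..}"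
    and left: "\<And>\<epsilon>. \<epsilon> > 0 \<Longrightarrow> g absolutely_integrable_on {..-\<epsilon>}"
    and sym: "(\<lambda>s. g s + g (- s)) integrable_on {0..}"
  shows "PV_integral g = integral {0..} (\<lambda>s. g s + g (- s))"
proof -
  define h where "h s = g s + g (- s)" for s
  have tail: "integral {y. \<epsilon> \<le> \<bar>y\<bar>} g = integral {0..} h - integral {0..\<epsilon>} h"
    if "\<epsilon> > 0" for \<epsilon>
  proof -
    have refl: "(\<lambda>s. g (- s)) absolutely_integrable_on {\<epsilon>..}
        \<and> integral {\<epsilon>..} (\<lambda>s. g (- s)) = integral {..-\<epsilon>} g"
      using has_absolute_integral_reflect_real[of "{\<epsilon>..}" "{..-\<epsilon>}" g] left[OF that] by force
    have "{y. \<epsilon> \<le> \<bar>y\<bar>} = {\<epsilon>..} \<union> {..-\<epsilon>}" by auto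
    moreover have "{\<epsilon>..} \<inter> {..-\<epsilon>} = {}" using that by auto
    ultimately have "integral {y. \<epsilon> \<le> \<bar>y\<bar>} g = integral {\<epsilon>..} g + integral {..-\<epsilon>} g"
      using that right left by (simp add: integral_Un absolutely_integrable_on_def)
    also have "\<dots> = integral {\<epsilon>..} h"
      unfolding h_def using refl right[OF that]
      by (simp add: integral_add absolutely_integrable_on_def)
    also have "integral {0..} h = integral {0..\<epsilon>} h + integral {\<epsilon>..} h"
    proof -
      have "{0..} = {0..\<epsilon>} \<union> {\<epsilon>..}" using that by auto
      moreover have "h integrable_on {\<epsilon>..}"
        unfolding h_def using refl right[OF that] by (simp add: integrable_add absolutely_integrable_on_def)
      moreover have "h integrable_on {0..\<epsilon>}"
        using integrable_on_subinterval[OF sym[folded h_def], of 0 \<epsilon>] by auto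
      moreover have "negligible ({0..\<epsilon>} \<inter> {\<epsilon>..})"
        by (rule negligible_subset[of "{\<epsilon>}"]) auto
      ultimately show ?thesis by (simp add: integral_Un)
    qed
    ultimately show ?thesis by simp
  qed
  have "((\<lambda>\<epsilon>. integral {0..} h - integral {0..\<epsilon>} h) \<longlongrightarrow> integral {0..} h - 0) (at_right 0)"
    using integrable_on_subinterval[OF sym[folded h_def], of 0 1]
    by (intro tendsto_diff tendsto_const tendsto_integral_Icc_upper_limit_0) auto
  moreover have "\<forall>\<^sub>F \<epsilon> in at_right 0.
      integral {0..} h - integral {0..\<epsilon>} h = integral {y. \<epsilon> \<le> \<bar>y\<bar>} g"
    using eventually_at_right_less[of "0::real"] by eventually_elim (simp add: tail)
  ultimately have "((\<lambda>\<epsilon>. integral {y. \<epsilon> \<le> \<bar>y\<bar>} g) \<longlongrightarrow> integral {0..} h) (at_right 0)"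
    by (simp add: Lim_transform_eventually)
  then show ?thesis
    unfolding PV_integral_def h_def by (intro tendsto_Lim) simp_all
qed

lemma integral_punctured_interval_symmetrized:
  fixes \<phi> :: "real \<Rightarrow> real"
  assumes "0 < d" "d \<le> b"
    and left: "\<phi> integrable_on {c - b..c - d}" and right: "\<phi> integrable_on {c + d..c + b}"
  shows "integral ({c - b..c - d} \<union> {c + d..c + b}) \<phi> = integral {d..b} (\<lambda>s. \<phi> (c - s) + \<phi> (c + s))"
proof -
  have "{c - b..c - d} \<inter> {c + d..c + b} = {}" using assms(1) by auto
  then have "integral ({c - b..c - d} \<union> {c + d..c + b}) \<phi>
      = integral {c - b..c - d} \<phi> + integral {c + d..c + b} \<phi>"
    using left right by (simp add: integral_Un)
  also have "integral {c - b..c - d} \<phi> = integral {d..b} (\<lambda>s. \<phi> (c - s))"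
    by (simp add: integral_reflect_shift_real)
  also have "integral {c + d..c + b} \<phi> = integral {d..b} (\<lambda>s. \<phi> (c + s))"
    using integral_shift_real_ivl[of "c + d" c "c + b" \<phi>] by (simp add: add.commute)
  also have "integral {d..b} (\<lambda>s. \<phi> (c - s)) + integral {d..b} (\<lambda>s. \<phi> (c + s))
      = integral {d..b} (\<lambda>s. \<phi> (c - s) + \<phi> (c + s))"
  proof (rule integral_add[symmetric])
    show "(\<lambda>s. \<phi> (c - s)) integrable_on {d..b}"
      using left integrable_affinity[of \<phi> "c - b" "c - d" "-1" c] by (auto simp: algebra_simps)
    show "(\<lambda>s. \<phi> (c + s)) integrable_on {d..b}"
      using right integrable_affinity[of \<phi> "c + d" "c + b" 1 c] by (auto simp: algebra_simps)
  qed
  finally show ?thesis .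
qed

lemma has_integral_punctured_limit_nonneg:
  fixes g :: "real \<Rightarrow> real"
  assumes c: "c \<in> {a..b}"
    and nonneg: "\<And>y. y \<in> {a..b} \<Longrightarrow> y \<noteq> c \<Longrightarrow> 0 \<le> g y"
    and int: "\<And>d. 0 < d \<Longrightarrow> g integrable_on ({a..c - d} \<union> {c + d..b})"
    and lim: "((\<lambda>d. integral ({a..c - d} \<union> {c + d..b}) g) \<longlongrightarrow> I) (at_right 0)"
  shows "(g has_integral I) {a..b}"
proof -
  define d :: "nat \<Rightarrow> real" where "d k = inverse (real (Suc k))" for k
  define S where "S k = {a..c - d k} \<union> {c + d k..b}" for k
  define gk where "gk k y = (if y \<in> S k then g y else 0)" for k y
  define g0 where "g0 y = (if y = c then 0 else g y)" for y
  have d_pos: "0 < d k" for k unfolding d_def by simp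
  have S_sub: "S k \<subseteq> {a..b}" for k using c d_pos[of k] unfolding S_def by auto
  have c_notin: "c \<notin> S k" for k using d_pos[of k] unfolding S_def by auto
  have gk_int: "integral {a..b} (gk k) = integral (S k) g" for k
    unfolding gk_def Henstock_Kurzweil_Integration.integral_restrict_Int using S_sub[of k]
    by (simp add: Int_absorb2)
  have d_lim: "filterlim d (at_right 0) sequentially"
    unfolding d_def
    by (rule filterlim_compose[OF filterlim_inverse_at_right_top])
       (rule filterlim_compose[OF filterlim_real_sequentially filterlim_Suc])
  have int_lim: "(\<lambda>k. integral {a..b} (gk k)) \<longlonglongrightarrow> I"
    unfolding gk_int S_def using filterlim_compose[OF lim d_lim] by simp
  have conv: "g0 integrable_on {a..b} \<and> (\<lambda>k. integral {a..b} (gk k)) \<longlonglongrightarrow> integral {a..b} g0"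
  proof (rule monotone_convergence_increasing)
    show "gk k integrable_on {a..b}" for k
      unfolding gk_def integrable_restrict_Int using S_sub[of k] int[OF d_pos[of k]]
      by (simp add: Int_absorb2 S_def)
    show "gk k y \<le> gk (Suc k) y" if "y \<in> {a..b}" for k y
    proof -
      have "d (Suc k) \<le> d k" unfolding d_def by (simp add: le_imp_inverse_le)
      then have "S k \<subseteq> S (Suc k)" unfolding S_def by auto
      then show ?thesis
        using nonneg[OF that] c_notin[of "Suc k"] unfolding gk_def by auto
    qed
    show "(\<lambda>k. gk k y) \<longlonglongrightarrow> g0 y" if "y \<in> {a..b}" for y
    proof (cases "y = c")
      case True
      then show ?thesis using c_notin unfolding gk_def g0_def by simp
    next
      case False
      then have "\<forall>\<^sub>F k in sequentially. d k < \<bar>y - c\<bar>"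
        using LIMSEQ_inverse_real_of_nat unfolding d_def by (intro order_tendstoD(2)) auto
      then have "\<forall>\<^sub>F k in sequentially. gk k y = g0 y"
        by eventually_elim (use that False in \<open>auto simp: gk_def g0_def S_def\<close>)
      then show ?thesis by (rule tendsto_eventually)
    qed
    show "bounded (range (\<lambda>k. integral {a..b} (gk k)))"
      using int_lim by (rule convergent_imp_bounded)
  qed
  then have "integral {a..b} g0 = I" using int_lim LIMSEQ_unique by blast
  then have "(g0 has_integral I) {a..b}" using conv by (simp add: has_integral_integral)
  then show ?thesis
    by (rule has_integral_spike_finite[of "{c}", rotated 2]) (auto simp: g0_def)
qed

lemma integral_antisymmetric_times_decreasing_nonpos:
  fixes \<phi> w :: "real \<Rightarrow> real"
  assumes "0 \<le> r"
    and cont: "continuous_on {m - r..m + r} \<phi>" "continuous_on {m - r..m + r} w"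
    and antisym: "\<And>s. s \<in> {m - r..m} \<Longrightarrow> \<phi> (2 * m - s) = - \<phi> s"
    and nonpos: "\<And>s. s \<in> {m - r..m} \<Longrightarrow> \<phi> s \<le> 0"
    and decreasing: "\<And>s t. m - r \<le> s \<Longrightarrow> s \<le> t \<Longrightarrow> t \<le> m + r \<Longrightarrow> w t \<le> w s"
  shows "integral {m - r..m + r} (\<lambda>s. \<phi> s * w s) \<le> 0"
proof -
  have cont_left: "continuous_on {m - r..m} \<phi>" "continuous_on {m - r..m} w"
    using cont by (auto intro: continuous_on_subset)
  have cont_reflected: "continuous_on {m - r..m} (\<lambda>s. w (2 * m - s))"
    by (rule continuous_on_compose2[OF cont(2)]) (auto intro: continuous_intros)
  have "integral {m - r..m + r} (\<lambda>s. \<phi> s * w s)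
      = integral {m - r..m} (\<lambda>s. \<phi> s * w s) + integral {m..m + r} (\<lambda>s. \<phi> s * w s)"
    using assms(1) cont
    by (intro Henstock_Kurzweil_Integration.integral_combine[symmetric]
          integrable_continuous_interval continuous_intros) auto
  also have "integral {m..m + r} (\<lambda>s. \<phi> s * w s) = integral {m - r..m} (\<lambda>s. \<phi> (2 * m - s) * w (2 * m - s))"
    using integral_reflect_shift_real[of "m - r" m "\<lambda>s. \<phi> s * w s" "2 * m"] by simp
  also have "\<dots> = integral {m - r..m} (\<lambda>s. - \<phi> s * w (2 * m - s))"
    by (rule integral_cong) (simp add: antisym)
  also have "integral {m - r..m} (\<lambda>s. \<phi> s * w s) + \<dots>
      = integral {m - r..m} (\<lambda>s. \<phi> s * (w s - w (2 * m - s)))"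
    using cont_left cont_reflected
    by (subst integral_add[symmetric])
       (auto simp: algebra_simps intro!: integrable_continuous_interval continuous_intros)
  also have "\<dots> \<le> integral {m - r..m} (\<lambda>s. 0)"
  proof (rule integral_le)
    show "(\<lambda>s. \<phi> s * (w s - w (2 * m - s))) integrable_on {m - r..m}"
      using cont_left cont_reflected by (intro integrable_continuous_interval continuous_intros)
    show "\<phi> s * (w s - w (2 * m - s)) \<le> 0" if "s \<in> {m - r..m}" for s
      using nonpos[OF that] decreasing[of s "2 * m - s"] that
      by (intro mult_nonpos_nonneg) auto
  qed (rule integrable_0)
  finally show ?thesis by simp
qed

lemma integral_atLeast_nonpos_if_blocks_nonpos:
  fixes g :: "real \<Rightarrow> real"
  assumes absint: "g absolutely_integrable_on {a..}" and "0 < p"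
    and blocks: "\<And>n::nat. integral {a + p * n..a + p * (n + 1)} g \<le> 0"
  shows "integral {a..} g \<le> 0"
proof -
  have int: "g integrable_on {a..b}" for b
    using set_integrable_subset[OF absint, of "{a..b}"]
    by (cases "a \<le> b") (auto simp: absolutely_integrable_on_def)
  have partial: "integral {a..a + p * n} g \<le> 0" for n :: nat
  proof (induction n)
    case (Suc n)
    have "integral {a..a + p * (n + 1)} g = integral {a..a + p * n} g + integral {a + p * n..a + p * (n + 1)} g"
      using \<open>0 < p\<close> int[of "a + p * (n + 1)"]
      by (intro Henstock_Kurzweil_Integration.integral_combine[symmetric]) (auto simp: algebra_simps)
    then show ?case using Suc blocks[of n] by (simp add: add.commute)
  qed simp
  have "filterlim (\<lambda>n. a + p * real n) at_top sequentially"
    using \<open>0 < p\<close>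
    by (intro filterlim_tendsto_add_at_top[OF tendsto_const]
          filterlim_tendsto_pos_mult_at_top[OF tendsto_const _ filterlim_real_sequentially])
  with tendsto_integral_atLeastAtMost_at_top[OF absint]
  have "(\<lambda>n. integral {a..a + p * real n} g) \<longlonglongrightarrow> integral {a..} g"
    by (rule filterlim_compose)
  then show ?thesis
    by (rule tendsto_upperbound) (use partial in auto)
qed

section \<open>The kernel K and the weight G\<close>

definition phi :: "real \<Rightarrow> real \<Rightarrow> real" where
  "phi a u = ln (1 + a\<^sup>2 / u\<^sup>2)"

definition psi :: "real \<Rightarrow> real \<Rightarrow> real" where
  "psi a u = phi a u + phi a (2 * pi - u)"

definition Q :: "real \<Rightarrow> real \<Rightarrow> real" where
  "Q a u = K a u - K a (2 * pi - u)"

lemma K_minus: "K a (- y) = - K a y"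
  unfolding K_def by simp

lemma K_pos: "a > 0 \<Longrightarrow> y > 0 \<Longrightarrow> K a y > 0"
  unfolding K_def by (simp add: add_pos_pos)

lemma K_antimono:
  assumes "a > 0" "0 < y" "y \<le> z"
  shows "K a z \<le> K a y"
proof -
  have "pi * y * (y\<^sup>2 + a\<^sup>2) \<le> pi * z * (z\<^sup>2 + a\<^sup>2)"
    using assms by (intro mult_mono power_mono add_mono) auto
  then show ?thesis
    using assms unfolding K_def by (intro divide_left_mono) (auto simp: add_pos_pos)
qed

lemma K_le_inverse:
  assumes "a > 0" "y > 0"
  shows "K a y \<le> 1 / (pi * y)"
proof -
  have "K a y = (a\<^sup>2 / (y\<^sup>2 + a\<^sup>2)) * (1 / (pi * y))"
    unfolding K_def by (simp add: field_simps)
  also have "\<dots> \<le> 1 * (1 / (pi * y))"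
    using assms by (intro mult_right_mono) (auto simp: add_pos_pos)
  finally show ?thesis by simp
qed

lemma K_continuous_on: "a > 0 \<Longrightarrow> 0 \<notin> S \<Longrightarrow> continuous_on S (K a)"
  unfolding K_def by (intro continuous_intros) (auto simp: add_pos_nonneg)

lemma phi_has_derivative:
  assumes "a > 0" "u \<noteq> 0"
  shows "(phi a has_real_derivative - 2 * pi * K a u) (at u)"
proof -
  have nz: "u\<^sup>2 \<noteq> 0" "u\<^sup>2 + a\<^sup>2 \<noteq> 0" using assms by (auto simp: add_pos_nonneg)
  have "1 + a\<^sup>2 / u\<^sup>2 = (u\<^sup>2 + a\<^sup>2) / u\<^sup>2" using nz by (simp add: field_simps)
  then have "(- (a\<^sup>2 * (2 * u)) / (u\<^sup>2)\<^sup>2) / (1 + a\<^sup>2 / u\<^sup>2)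
      = - (a\<^sup>2 * (2 * u)) / (u\<^sup>2 * (u\<^sup>2 + a\<^sup>2))"
    using nz by (simp add: power2_eq_square)
  also have "\<dots> = - 2 * a\<^sup>2 / (u * (u\<^sup>2 + a\<^sup>2))"
    using assms by (simp add: power2_eq_square)
  also have "\<dots> = - 2 * pi * K a u"
    unfolding K_def by simp
  finally have "(- (a\<^sup>2 * (2 * u)) / (u\<^sup>2)\<^sup>2) / (1 + a\<^sup>2 / u\<^sup>2) = - 2 * pi * K a u" .
  moreover have "1 + a\<^sup>2 / u\<^sup>2 > 0" by (simp add: add_pos_nonneg)
  ultimately show ?thesis
    unfolding phi_def[abs_def] using assms by (auto intro!: derivative_eq_intros simp: mult.commute)
qed

lemma psi_has_derivative:
  assumes "a > 0" "u \<noteq> 0" "u \<noteq> 2 * pi"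
  shows "(psi a has_real_derivative - 2 * pi * Q a u) (at u)"
proof -
  have "((\<lambda>u. phi a u + phi a (2 * pi - u)) has_real_derivative
      - 2 * pi * K a u + (- 2 * pi * K a (2 * pi - u)) * (0 - 1)) (at u)"
    using assms by (intro DERIV_add phi_has_derivative DERIV_chain2[of "phi a"] derivative_eq_intros) auto
  then show ?thesis
    unfolding psi_def[abs_def] Q_def by (simp add: algebra_simps)
qed

lemma Q_nonneg: "a > 0 \<Longrightarrow> 0 < u \<Longrightarrow> u \<le> pi \<Longrightarrow> Q a u \<ge> 0"
  using K_antimono[of a u "2 * pi - u"] unfolding Q_def by auto

lemma psi_antimono:
  assumes "a > 0" "0 < u" "u \<le> v" "v \<le> pi"
  shows "psi a v \<le> psi a u"
proof (rule DERIV_nonpos_imp_nonincreasing[OF \<open>u \<le> v\<close>])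
  fix t assume "u \<le> t" "t \<le> v"
  then show "\<exists>y. DERIV (psi a) t :> y \<and> y \<le> 0"
    using assms Q_nonneg[of a t] by (intro exI[of _ "- 2 * pi * Q a t"] conjI psi_has_derivative) auto
qed

lemma G_eq_psi:
  assumes "y \<noteq> x"
  shows "G a x y = (psi a x - psi a \<bar>x - y\<bar>) / (2 * pi)"
proof -
  have "(x - y + 2 * pi * sgn (y - x))\<^sup>2 = (2 * pi - \<bar>x - y\<bar>)\<^sup>2"
    using assms by (cases "x < y") (auto simp: power2_eq_square algebra_simps)
  then have "G a x y = (1 / (2 * pi)) * ln ((1 + a\<^sup>2 / x\<^sup>2) / (1 + a\<^sup>2 / (x - y)\<^sup>2)
      * ((1 + a\<^sup>2 / (2 * pi - x)\<^sup>2) / (1 + a\<^sup>2 / (2 * pi - \<bar>x - y\<bar>)\<^sup>2)))"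
    unfolding G_def by simp
  also have "ln ((1 + a\<^sup>2 / x\<^sup>2) / (1 + a\<^sup>2 / (x - y)\<^sup>2)
      * ((1 + a\<^sup>2 / (2 * pi - x)\<^sup>2) / (1 + a\<^sup>2 / (2 * pi - \<bar>x - y\<bar>)\<^sup>2)))
      = psi a x - psi a \<bar>x - y\<bar>"
  proof -
    have pos: "0 < 1 + a\<^sup>2 / t\<^sup>2" for t :: real by (simp add: add_pos_nonneg)
    then have "1 + a\<^sup>2 / t\<^sup>2 \<noteq> 0" for t :: real by (metis less_irrefl)
    with pos show ?thesis
      unfolding psi_def phi_def by (simp add: ln_mult ln_div divide_pos_pos)
  qed
  finally show ?thesis by simp
qed

lemma K_has_integral_atLeast:
  assumes "a > 0" "\<epsilon> > 0"
  shows "(K a has_integral phi a \<epsilon> / (2 * pi)) {\<epsilon>..}"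
proof (rule has_integral_to_inf)
  show "K a integrable_on {\<epsilon>..y}" for y
    using assms by (intro integrable_continuous_interval K_continuous_on) auto
  have primitive: "integral {\<epsilon>..y} (K a) = (phi a \<epsilon> - phi a y) / (2 * pi)" if "\<epsilon> \<le> y" for y
  proof -
    have "(K a has_integral (- phi a y / (2 * pi) - - phi a \<epsilon> / (2 * pi))) {\<epsilon>..y}"
    proof (rule fundamental_theorem_of_calculus[OF that])
      fix t assume "t \<in> {\<epsilon>..y}"
      then have "((\<lambda>t. - phi a t / (2 * pi)) has_real_derivative - (- 2 * pi * K a t) / (2 * pi)) (at t)"
        using assms by (intro DERIV_cdivide DERIV_minus phi_has_derivative) auto
      then show "((\<lambda>t. - phi a t / (2 * pi)) has_vector_derivative K a t) (at t within {\<epsilon>..y})"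
        by (auto simp: has_real_derivative_iff_has_vector_derivative[symmetric] intro: has_field_derivative_at_within)
    qed
    then show ?thesis by (simp add: integral_unique diff_divide_distrib)
  qed
  have "(phi a \<longlongrightarrow> 0) at_top"
    unfolding phi_def by real_asymp
  then have "((\<lambda>y. (phi a \<epsilon> - phi a y) / (2 * pi)) \<longlongrightarrow> phi a \<epsilon> / (2 * pi)) at_top"
    by (auto intro!: tendsto_eq_intros)
  moreover have "\<forall>\<^sub>F y in at_top. (phi a \<epsilon> - phi a y) / (2 * pi) = integral {\<epsilon>..y} (K a)"
    using eventually_ge_at_top[of \<epsilon>] by eventually_elim (simp add: primitive)
  ultimately show "((\<lambda>y. integral {\<epsilon>..y} (K a)) \<longlongrightarrow> phi a \<epsilon> / (2 * pi)) at_top"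
    by (rule Lim_transform_eventually)
qed (use assms K_pos in \<open>auto intro: less_imp_le\<close>)

lemma K_absolutely_integrable_atLeast:
  "a > 0 \<Longrightarrow> \<epsilon> > 0 \<Longrightarrow> K a absolutely_integrable_on {\<epsilon>..}"
  using K_has_integral_atLeast K_pos
  by (intro nonnegative_absolutely_integrable_1) (auto intro: less_imp_le)

lemma K_absolutely_integrable_atMost:
  assumes "a > 0" "\<epsilon> > 0"
  shows "K a absolutely_integrable_on {..-\<epsilon>}"
proof -
  have "(\<lambda>y. (-1) *\<^sub>R K a y) absolutely_integrable_on {\<epsilon>..}"
    using K_absolutely_integrable_atLeast[OF assms] by (rule absolutely_integrable_scaleR_left)
  then show ?thesis
    using has_absolute_integral_reflect_real[of "{\<epsilon>..}" "{..-\<epsilon>}" "K a"] by (force simp: K_minus)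
qed

lemma tendsto_phi_reflected:
  assumes "a > 0"
  shows "((\<lambda>d. phi a (2 * pi - d)) \<longlongrightarrow> phi a (2 * pi)) (at_right 0)"
proof -
  have "isCont (phi a) (2 * pi)"
    by (rule DERIV_isCont[OF phi_has_derivative[OF assms]]) simp
  then have "isCont (\<lambda>d. phi a (2 * pi - d)) 0"
    by (intro isCont_o2[where g = "phi a" and f = "\<lambda>d. 2 * pi - d"] continuous_intros) simp
  then show ?thesis
    unfolding isCont_def by (rule filterlim_mono) (simp_all add: at_le)
qed

section \<open>The estimate for a fixed profile and point\<close>

locale Ha_estimate =
  fixes a :: real and f :: "real \<Rightarrow> real" and x :: real
  assumes a_pos: "a > 0"
    and f_deriv: "\<And>t. (f has_real_derivative deriv f t) (at t)"
    and deriv_continuous: "\<And>t. isCont (deriv f) t"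
    and f_bounded: "bounded (range f)"
    and deriv_bounded: "bounded (range (deriv f))"
    and f_periodic: "\<And>t. f (t + 2 * pi) = f t"
    and f_even: "\<And>t. f (- t) = f t"
    and deriv_nonneg: "\<And>t. t \<in> {0..<pi} \<Longrightarrow> deriv f t \<ge> 0"
    and x_pos: "0 < x" and x_le: "x \<le> pi / 2"
begin

definition F :: "real \<Rightarrow> real" where
  "F s = f (x - s) - f (x + s)"

lemma f_continuous_on: "continuous_on S f"
  using f_deriv by (meson DERIV_isCont continuous_at_imp_continuous_on)

lemma f_periodic_nat: "f (t + 2 * pi * real n) = f t"
proof (induction n arbitrary: t)
  case (Suc n)
  show ?case using f_periodic[of "t + 2 * pi * real n"] Suc by (simp add: algebra_simps)
qed simp

lemma deriv_nonneg_atLeastAtMost: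
  assumes "0 \<le> t" "t \<le> pi"
  shows "deriv f t \<ge> 0"
proof (cases "t < pi")
  case False
  have "(deriv f \<longlongrightarrow> deriv f pi) (at_left pi)"
    using deriv_continuous by (simp add: isCont_def filterlim_at_split)
  moreover have "\<forall>\<^sub>F t in at_left pi. 0 \<le> deriv f t"
    unfolding eventually_at_left[OF pi_gt_zero] using deriv_nonneg by (intro exI[of _ 0]) auto
  ultimately have "0 \<le> deriv f pi" by (rule tendsto_lowerbound) simp
  then show ?thesis using False assms by simp
qed (use assms deriv_nonneg in auto)

lemma f_mono:
  assumes "0 \<le> u" "u \<le> v" "v \<le> pi"
  shows "f u \<le> f v"
proof (rule DERIV_nonneg_imp_nondecreasing[OF \<open>u \<le> v\<close>])
  fix t assume "u \<le> t" "t \<le> v"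
  then show "\<exists>y. DERIV f t :> y \<and> y \<ge> 0"
    using assms f_deriv[of t] deriv_nonneg_atLeastAtMost[of t] by auto
qed

lemma f_Lipschitz:
  obtains L where "L \<ge> 0" "\<And>u v. \<bar>f u - f v\<bar> \<le> L * \<bar>u - v\<bar>"
proof -
  obtain L where L: "\<And>t. \<bar>deriv f t\<bar> \<le> L"
    using deriv_bounded by (auto simp: bounded_iff)
  have bound: "\<bar>f u - f v\<bar> \<le> L * \<bar>u - v\<bar>" if vu: "v < u" for u v
  proof -
    obtain z where "f u - f v = (u - v) * deriv f z"
      using MVT2[OF vu f_deriv] by blast
    then show ?thesis
      using L[of z] vu by (simp add: abs_mult mult.commute mult_right_mono)
  qed
  show ?thesis
  proof
    show "L \<ge> 0" using L[of 0] by linarith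
    show "\<bar>f u - f v\<bar> \<le> L * \<bar>u - v\<bar>" for u v
      using bound[of u v] bound[of v u] by (cases u v rule: linorder_cases) (auto simp: abs_minus_commute)
  qed
qed

lemma F_continuous_on: "continuous_on S F"
  unfolding F_def[abs_def] by (intro continuous_intros continuous_on_compose2[OF f_continuous_on[of UNIV]]) auto

lemma F_has_derivative: "(F has_real_derivative - (deriv f (x - s) + deriv f (x + s))) (at s)"
proof -
  have "((\<lambda>s. f (x - s) - f (x + s)) has_real_derivative
      deriv f (x - s) * (0 - 1) - deriv f (x + s) * (0 + 1)) (at s)"
    by (intro derivative_intros DERIV_chain2[OF f_deriv])
  then show ?thesis unfolding F_def[abs_def] by simp
qed

lemma F_linear_bound:
  obtains L where "L \<ge> 0" "\<And>s. \<bar>F s\<bar> \<le> L * \<bar>s\<bar>"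
proof -
  obtain L where "L \<ge> 0" and L: "\<And>u v. \<bar>f u - f v\<bar> \<le> L * \<bar>u - v\<bar>"
    using f_Lipschitz by blast
  have "\<bar>F s\<bar> \<le> (2 * L) * \<bar>s\<bar>" for s
    using L[of "x - s" "x + s"] by (simp add: F_def)
  with \<open>L \<ge> 0\<close> show ?thesis using that[of "2 * L"] by simp
qed

lemma F_bounded: "bounded (F ` S)"
proof -
  obtain B where "\<And>t. \<bar>f t\<bar> \<le> B" using f_bounded by (auto simp: bounded_iff)
  then have "\<bar>F s\<bar> \<le> 2 * B" for s
    unfolding F_def by (metis abs_triangle_ineq4 add_mono mult_2 order_trans)
  then show ?thesis by (auto simp: bounded_iff)
qed

lemma F_periodic_nat: "F (s + 2 * pi * real n) = F s"
proof -
  have "f (x - (s + 2 * pi * real n)) = f (x - s)"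
    using f_periodic_nat[of "x - (s + 2 * pi * real n)" n] by simp
  moreover have "f (x + (s + 2 * pi * real n)) = f (x + s)"
    using f_periodic_nat[of "x + s" n] by (simp add: add.assoc)
  ultimately show ?thesis unfolding F_def by simp
qed

lemma F_reflect: "F (2 * pi - s) = - F s"
proof -
  have "f (x - (2 * pi - s)) = f (x + s)"
    using f_periodic[of "x - (2 * pi - s)"] by simp
  moreover have "f (x + (2 * pi - s)) = f (x - s)"
    using f_periodic[of "x - s"] by (simp add: add_diff_eq diff_add_eq)
  ultimately show ?thesis unfolding F_def by simp
qed

lemma F_nonpos:
  assumes "0 \<le> s" "s \<le> pi"
  shows "F s \<le> 0"
proof -
  have "f (x - s) = f \<bar>x - s\<bar>" using f_even[of "x - s"] by (simp add: abs_if)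
  moreover have "f \<bar>x - s\<bar> \<le> f (x + s)" if "x + s \<le> pi"
    using assms that x_pos by (intro f_mono) auto
  moreover have "f \<bar>x - s\<bar> \<le> f (x + s)" if "\<not> x + s \<le> pi"
  proof -
    have "f (x + s) = f (2 * pi - x - s)"
      using f_even[of "x + s - 2 * pi"] f_periodic[of "x + s - 2 * pi"] by (simp add: algebra_simps)
    moreover have "f \<bar>x - s\<bar> \<le> f (2 * pi - x - s)"
      using assms that x_pos x_le by (intro f_mono) auto
    ultimately show ?thesis by simp
  qed
  ultimately show ?thesis unfolding F_def by (cases "x + s \<le> pi") auto
qed

lemma FK_absolutely_integrable: "(\<lambda>s. F s * K a s) absolutely_integrable_on {0..}"
proof -
  obtain L where "L \<ge> 0" and L: "\<And>s. \<bar>F s\<bar> \<le> L * \<bar>s\<bar>"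
    using F_linear_bound by blast
  have "(\<lambda>s. F s * K a s) absolutely_integrable_on {0..1}"
  proof (rule absolutely_integrable_on_Icc_if_continuous_bounded_on_Ioc)
    show "continuous_on {0<..1} (\<lambda>s. F s * K a s)"
      using a_pos by (intro continuous_intros F_continuous_on K_continuous_on) auto
    fix s :: real assume "s \<in> {0<..1}"
    then have "\<bar>F s * K a s\<bar> = \<bar>F s\<bar> * K a s"
      using K_pos[OF a_pos, of s] by (simp add: abs_mult)
    also have "\<dots> \<le> (L * s) * (1 / (pi * s))"
      using L[of s] K_pos[OF a_pos, of s] K_le_inverse[OF a_pos, of s] \<open>s \<in> {0<..1}\<close> \<open>L \<ge> 0\<close>
      by (intro mult_mono) auto
    also have "\<dots> = L / pi" using \<open>s \<in> {0<..1}\<close> by simp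
    finally show "\<bar>F s * K a s\<bar> \<le> L / pi" .
  qed
  moreover have "(\<lambda>s. F s * K a s) absolutely_integrable_on {1..}"
    using F_bounded K_absolutely_integrable_atLeast[OF a_pos, of 1]
    by (intro absolutely_integrable_bounded_measurable_product_real
          continuous_imp_measurable_on_sets_lebesgue F_continuous_on) auto
  moreover have "{0..} = {0..1} \<union> {1::real..}" by auto
  ultimately show ?thesis by (simp add: set_integrable_Un)
qed

lemma H_eq_integral_FK: "H a f x = integral {0..} (\<lambda>s. F s * K a s)"
proof -
  have shifted: "(\<lambda>y. f (x - y) * K a y) absolutely_integrable_on S"
    if "K a absolutely_integrable_on S" "S \<in> sets lebesgue" for S
  proof (rule absolutely_integrable_bounded_measurable_product_real[OF _ that(2) _ that(1)])
    show "(\<lambda>y. f (x - y)) \<in> borel_measurable (lebesgue_on S)"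
      by (intro continuous_imp_measurable_on_sets_lebesgue that(2)
            continuous_on_compose2[OF f_continuous_on[of UNIV]] continuous_intros) auto
    show "bounded ((\<lambda>y. f (x - y)) ` S)"
      using f_bounded by (rule bounded_subset) auto
  qed
  have "H a f x = integral {0..} (\<lambda>s. f (x - s) * K a s + f (x - - s) * K a (- s))"
    unfolding H_def
  proof (rule PV_integral_eq_integral_symmetrized)
    show "(\<lambda>y. f (x - y) * K a y) absolutely_integrable_on {\<epsilon>..}" if "\<epsilon> > 0" for \<epsilon>
      using a_pos that by (intro shifted K_absolutely_integrable_atLeast) auto
    show "(\<lambda>y. f (x - y) * K a y) absolutely_integrable_on {..-\<epsilon>}" if "\<epsilon> > 0" for \<epsilon>
      using a_pos that by (intro shifted K_absolutely_integrable_atMost) auto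
    show "(\<lambda>s. f (x - s) * K a s + f (x - - s) * K a (- s)) integrable_on {0..}"
      using FK_absolutely_integrable
      by (simp add: absolutely_integrable_on_def F_def K_minus algebra_simps)
  qed
  then show ?thesis by (simp add: F_def K_minus algebra_simps)
qed

lemma integral_FK_window_nonpos:
  assumes "0 \<le> c" "c \<le> pi" "0 < 2 * pi * real n + c"
  shows "integral {2 * pi * real n + c..2 * pi * real n + 2 * pi - c} (\<lambda>s. F s * K a s) \<le> 0"
proof -
  define m where "m = 2 * pi * real n + pi"
  have "integral {m - (pi - c)..m + (pi - c)} (\<lambda>s. F s * K a s) \<le> 0"
  proof (rule integral_antisymmetric_times_decreasing_nonpos)
    show "continuous_on {m - (pi - c)..m + (pi - c)} F" by (rule F_continuous_on)
    show "continuous_on {m - (pi - c)..m + (pi - c)} (K a)"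
      using a_pos assms(3) by (intro K_continuous_on) (auto simp: m_def)
    show "F (2 * m - s) = - F s" for s
      using F_periodic_nat[of "2 * pi - s" "2 * n"] F_reflect[of s]
      by (simp add: m_def algebra_simps)
    show "F s \<le> 0" if "s \<in> {m - (pi - c)..m}" for s
      using F_periodic_nat[of "s - 2 * pi * real n" n] F_nonpos[of "s - 2 * pi * real n"] that assms
      by (simp add: m_def)
    show "K a t \<le> K a s" if "m - (pi - c) \<le> s" "s \<le> t" for s t
      using that assms by (intro K_antimono a_pos) (auto simp: m_def)
  qed (use assms in simp)
  then show ?thesis by (simp add: m_def algebra_simps)
qed

lemma FK_integrable_on:
  "S \<in> sets lebesgue \<Longrightarrow> S \<subseteq> {0..} \<Longrightarrow> (\<lambda>s. F s * K a s) integrable_on S"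
  using set_integrable_subset[OF FK_absolutely_integrable] by (simp add: absolutely_integrable_on_def)

lemma integral_FK_split:
  "integral {0..} (\<lambda>s. F s * K a s) = integral {0..x} (\<lambda>s. F s * Q a s)
     + integral {x..2 * pi - x} (\<lambda>s. F s * K a s) + integral {2 * pi..} (\<lambda>s. F s * K a s)"
proof -
  define FK where "FK = (\<lambda>s. F s * K a s)"
  have x_lt: "x < 2 * pi - x" using x_pos x_le pi_gt_zero by linarith
  have "integral {0..} FK = integral {0..2 * pi} FK + integral {2 * pi..} FK"
  proof -
    have "{0..} = {0..2 * pi} \<union> {2 * pi..}" using pi_gt_zero by (auto simp del: pi_gt_zero)
    moreover have "negligible ({0..2 * pi} \<inter> {2 * pi..})"
      by (rule negligible_subset[of "{2 * pi}"]) auto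
    ultimately show ?thesis
      unfolding FK_def using pi_gt_zero by (simp del: pi_gt_zero add: integral_Un FK_integrable_on)
  qed
  also have "integral {0..2 * pi} FK
      = integral {0..x} FK + integral {x..2 * pi - x} FK + integral {2 * pi - x..2 * pi} FK"
    using x_pos x_lt FK_integrable_on[of "{0..2 * pi}"] FK_integrable_on[of "{0..2 * pi - x}"]
    by (simp add: FK_def Henstock_Kurzweil_Integration.integral_combine)
  also have "integral {2 * pi - x..2 * pi} FK = integral {0..x} (\<lambda>s. - F s * K a (2 * pi - s))"
    using integral_reflect_shift_real[of 0 x FK "2 * pi"] by (simp add: FK_def F_reflect)
  also have "integral {0..x} FK + integral {0..x} (\<lambda>s. - F s * K a (2 * pi - s))
      = integral {0..x} (\<lambda>s. F s * Q a s)"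
  proof -
    have "continuous_on {0..x} (\<lambda>s. - F s * K a (2 * pi - s))"
      using a_pos x_pos x_lt
      by (intro continuous_intros F_continuous_on continuous_on_compose2[OF K_continuous_on[of a "{2 * pi - x..}"]]) auto
    then show ?thesis
      using FK_integrable_on[of "{0..x}"]
      by (subst integral_add[symmetric]) (auto simp: FK_def Q_def algebra_simps intro: integrable_continuous_interval)
  qed
  ultimately show ?thesis unfolding FK_def by simp
qed

lemma integral_FK_tail_nonpos: "integral {2 * pi..} (\<lambda>s. F s * K a s) \<le> 0"
proof (rule integral_atLeast_nonpos_if_blocks_nonpos)
  show "(\<lambda>s. F s * K a s) absolutely_integrable_on {2 * pi..}"
    using pi_gt_zero by (intro set_integrable_subset[OF FK_absolutely_integrable]) (auto simp del: pi_gt_zero)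
  show "integral {2 * pi + 2 * pi * real n..2 * pi + 2 * pi * (real n + 1)} (\<lambda>s. F s * K a s) \<le> 0" for n
  proof -
    have "0 < 2 * pi * real (Suc n) + 0" by simp
    then show ?thesis using integral_FK_window_nonpos[of 0 "Suc n"] by (simp add: algebra_simps)
  qed
qed simp

lemma integral_FK_le_integral_FQ:
  "integral {0..} (\<lambda>s. F s * K a s) \<le> integral {0..x} (\<lambda>s. F s * Q a s)"
  using integral_FK_split integral_FK_tail_nonpos integral_FK_window_nonpos[of x 0] x_pos x_le by simp

lemma Q_continuous_on: "continuous_on {0<..x} (Q a)"
  unfolding Q_def[abs_def] using a_pos x_pos x_le
  by (intro continuous_intros K_continuous_on continuous_on_compose2[OF K_continuous_on[of a "{2 * pi - x..}"]])
     auto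

lemma abs_Q_le_K:
  assumes "0 < s" "s \<le> x"
  shows "\<bar>Q a s\<bar> \<le> K a s"
proof -
  have "Q a s \<ge> 0" using assms x_le a_pos by (intro Q_nonneg) auto
  moreover have "K a (2 * pi - s) > 0" using assms x_le a_pos by (intro K_pos) auto
  ultimately show ?thesis unfolding Q_def by linarith
qed

lemma FQ_absolutely_integrable: "(\<lambda>s. F s * Q a s) absolutely_integrable_on {0..x}"
proof -
  obtain L where "L \<ge> 0" and L: "\<And>s. \<bar>F s\<bar> \<le> L * \<bar>s\<bar>"
    using F_linear_bound by blast
  show ?thesis
  proof (rule absolutely_integrable_on_Icc_if_continuous_bounded_on_Ioc)
    show "continuous_on {0<..x} (\<lambda>s. F s * Q a s)"
      by (intro continuous_intros F_continuous_on Q_continuous_on)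
    fix s :: real assume s: "s \<in> {0<..x}"
    have "\<bar>F s * Q a s\<bar> = \<bar>F s\<bar> * \<bar>Q a s\<bar>" by (simp add: abs_mult)
    also have "\<dots> \<le> (L * s) * (1 / (pi * s))"
      using L[of s] abs_Q_le_K[of s] K_le_inverse[OF a_pos, of s] s \<open>L \<ge> 0\<close>
      by (intro mult_mono) auto
    also have "\<dots> = L / pi" using s by simp
    finally show "\<bar>F s * Q a s\<bar> \<le> L / pi" .
  qed
qed

definition G_dist :: "real \<Rightarrow> real" where
  "G_dist s = (psi a x - psi a s) / (2 * pi)"

lemma G_eq_G_dist: "y \<noteq> x \<Longrightarrow> G a x y = G_dist \<bar>x - y\<bar>"
  by (simp add: G_eq_psi G_dist_def)

lemma G_dist_has_derivative:
  assumes "0 < s" "s \<le> x"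
  shows "(G_dist has_real_derivative Q a s) (at s)"
proof -
  have "(G_dist has_real_derivative (0 - (- 2 * pi * Q a s)) / (2 * pi)) (at s)"
    unfolding G_dist_def[abs_def] using assms a_pos x_le pi_gt_zero
    by (intro DERIV_cdivide DERIV_diff DERIV_const psi_has_derivative) auto
  then show ?thesis by simp
qed

lemma G_dist_continuous_on: "0 < d \<Longrightarrow> continuous_on {d..x} G_dist"
  using G_dist_has_derivative
  by (meson DERIV_isCont atLeastAtMost_iff continuous_at_imp_continuous_on order_less_le_trans)

lemma G_dist_nonpos: "0 < s \<Longrightarrow> s \<le> x \<Longrightarrow> G_dist s \<le> 0"
  using psi_antimono[OF a_pos, of s x] x_le unfolding G_dist_def by (simp add: divide_nonpos_pos)

lemma deriv_G_integrable_on: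
  assumes "0 < d"
  shows "(\<lambda>y. deriv f y * G a x y) integrable_on {0..x - d}"
    and "(\<lambda>y. deriv f y * G a x y) integrable_on {x + d..2 * x}"
proof -
  have deriv_cont: "continuous_on S (deriv f)" for S
    using deriv_continuous by (simp add: continuous_at_imp_continuous_on)
  have "(\<lambda>y. deriv f y * G_dist (x - y)) integrable_on {0..x - d}"
    using assms by (intro integrable_continuous_interval continuous_intros deriv_cont
          continuous_on_compose2[OF G_dist_continuous_on]) auto
  then show "(\<lambda>y. deriv f y * G a x y) integrable_on {0..x - d}"
    by (rule integrable_eq) (use assms G_eq_G_dist in force)
  have "(\<lambda>y. deriv f y * G_dist (y - x)) integrable_on {x + d..2 * x}"
    using assms by (intro integrable_continuous_interval continuous_intros deriv_cont
          continuous_on_compose2[OF G_dist_continuous_on]) auto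
  then show "(\<lambda>y. deriv f y * G a x y) integrable_on {x + d..2 * x}"
    by (rule integrable_eq) (use assms G_eq_G_dist in force)
qed

lemma integral_punctured_deriv_G:
  assumes "0 < d" "d \<le> x"
  shows "integral ({0..x - d} \<union> {x + d..2 * x}) (\<lambda>y. deriv f y * G a x y)
       = F d * G_dist d + integral {d..x} (\<lambda>s. F s * Q a s)"
proof -
  have ivl: "{x - x..x - d} = {0..x - d}" "{x + d..x + x} = {x + d..2 * x}" by simp_all
  have "integral ({0..x - d} \<union> {x + d..2 * x}) (\<lambda>y. deriv f y * G a x y)
      = integral {d..x} (\<lambda>s. deriv f (x - s) * G a x (x - s) + deriv f (x + s) * G a x (x + s))"
    by (rule integral_punctured_interval_symmetrized[of d x _ x, unfolded ivl,
          OF assms deriv_G_integrable_on[OF assms(1)]])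
  also have "\<dots> = integral {d..x} (\<lambda>s. (deriv f (x - s) + deriv f (x + s)) * G_dist s)"
  proof (rule integral_cong)
    fix s assume "s \<in> {d..x}"
    then have "s > 0" using assms by auto
    then show "deriv f (x - s) * G a x (x - s) + deriv f (x + s) * G a x (x + s)
        = (deriv f (x - s) + deriv f (x + s)) * G_dist s"
      by (simp add: G_eq_G_dist distrib_right)
  qed
  also have "\<dots> = F d * G_dist d + integral {d..x} (\<lambda>s. F s * Q a s)"
  proof -
    have "((\<lambda>s. - (deriv f (x - s) + deriv f (x + s)) * G_dist s) has_integral
        - F d * G_dist d - integral {d..x} (\<lambda>s. F s * Q a s)) {d..x}"
    proof (rule integration_by_parts[OF bounded_bilinear_mult \<open>d \<le> x\<close> F_continuous_on
          G_dist_continuous_on[OF \<open>0 < d\<close>]])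
      show "(F has_vector_derivative - (deriv f (x - s) + deriv f (x + s))) (at s)" for s
        using F_has_derivative by (simp add: has_real_derivative_iff_has_vector_derivative)
      show "(G_dist has_vector_derivative Q a s) (at s)" if "s \<in> {d..x}" for s
        using G_dist_has_derivative[of s] that assms
        by (simp add: has_real_derivative_iff_has_vector_derivative)
      have "(\<lambda>s. F s * Q a s) integrable_on {d..x}"
        using assms by (intro integrable_continuous_interval continuous_intros F_continuous_on
            continuous_on_subset[OF Q_continuous_on]) auto
      then show "((\<lambda>s. F s * Q a s) has_integral
          F x * G_dist x - F d * G_dist d - (- F d * G_dist d - integral {d..x} (\<lambda>s. F s * Q a s))) {d..x}"
        by (simp add: G_dist_def integrable_integral)
    qed
    from has_integral_neg[OF this]
    have "((\<lambda>s. (deriv f (x - s) + deriv f (x + s)) * G_dist s) has_integral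
        F d * G_dist d + integral {d..x} (\<lambda>s. F s * Q a s)) {d..x}"
      by (simp add: algebra_simps)
    then show ?thesis by (rule integral_unique)
  qed
  finally show ?thesis .
qed

lemma tendsto_F_G_dist: "((\<lambda>d. F d * G_dist d) \<longlongrightarrow> 0) (at_right 0)"
proof -
  have "((\<lambda>d. d * phi a d) \<longlongrightarrow> 0) (at_right 0)"
    unfolding phi_def using a_pos by real_asymp
  then have "((\<lambda>d. (d * (psi a x - phi a (2 * pi - d)) - d * phi a d) / (2 * pi))
      \<longlongrightarrow> (0 * (psi a x - phi a (2 * pi)) - 0) / (2 * pi)) (at_right 0)"
    by (intro tendsto_divide tendsto_diff tendsto_mult tendsto_const tendsto_ident_at tendsto_phi_reflected[OF a_pos])
       simp_all
  moreover have "d * G_dist d = (d * (psi a x - phi a (2 * pi - d)) - d * phi a d) / (2 * pi)" for d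
    unfolding G_dist_def psi_def[of a d] by (simp add: algebra_simps)
  ultimately have d_G_dist: "((\<lambda>d. d * G_dist d) \<longlongrightarrow> 0) (at_right 0)"
    by simp
  obtain L where L: "\<And>s. \<bar>F s\<bar> \<le> L * \<bar>s\<bar>"
    using F_linear_bound by blast
  have "\<forall>d. norm (F d * G_dist d) \<le> L * \<bar>d * G_dist d\<bar>"
    using L by (simp add: abs_mult mult_right_mono flip: mult.assoc)
  moreover have "((\<lambda>d. L * \<bar>d * G_dist d\<bar>) \<longlongrightarrow> 0) (at_right 0)"
    using tendsto_mult_right_zero[OF tendsto_rabs_zero[OF d_G_dist]] .
  ultimately show ?thesis
    by (rule Lim_null_comparison[OF always_eventually])
qed

lemma tendsto_integral_punctured_deriv_G:
  "((\<lambda>d. integral ({0..x - d} \<union> {x + d..2 * x}) (\<lambda>y. deriv f y * G a x y))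
     \<longlongrightarrow> integral {0..x} (\<lambda>s. F s * Q a s)) (at_right 0)"
proof -
  have "((\<lambda>d. integral {d..x} (\<lambda>s. F s * Q a s))
      \<longlongrightarrow> integral {0..x} (\<lambda>s. F s * Q a s)) (at_right 0)"
    using FQ_absolutely_integrable x_pos
    by (intro tendsto_integral_Icc_lower_limit) (auto simp: absolutely_integrable_on_def)
  then have "((\<lambda>d. F d * G_dist d + integral {d..x} (\<lambda>s. F s * Q a s))
      \<longlongrightarrow> integral {0..x} (\<lambda>s. F s * Q a s)) (at_right 0)"
    using tendsto_add[OF tendsto_F_G_dist] by simp
  moreover have "\<forall>\<^sub>F d in at_right 0. F d * G_dist d + integral {d..x} (\<lambda>s. F s * Q a s)
      = integral ({0..x - d} \<union> {x + d..2 * x}) (\<lambda>y. deriv f y * G a x y)"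
  proof -
    have "\<forall>\<^sub>F d in at_right 0. 0 < d \<and> d < x"
      using x_pos by (auto simp: eventually_at_right_field intro!: exI[of _ x])
    then show ?thesis
      by eventually_elim (simp add: integral_punctured_deriv_G less_imp_le)
  qed
  ultimately show ?thesis by (rule Lim_transform_eventually)
qed

lemma deriv_G_nonpos:
  assumes "y \<in> {0..2 * x}" "y \<noteq> x"
  shows "deriv f y * G a x y \<le> 0"
proof -
  have "deriv f y \<ge> 0" using assms x_le by (intro deriv_nonneg_atLeastAtMost) auto
  moreover have "0 < \<bar>x - y\<bar>" "\<bar>x - y\<bar> \<le> x" using assms by auto
  then have "G a x y \<le> 0"
    using G_eq_G_dist[OF \<open>y \<noteq> x\<close>] G_dist_nonpos by simp
  ultimately show ?thesis by (simp add: mult_nonneg_nonpos)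
qed

lemma integral_deriv_G_eq_integral_FQ:
  "integral {0..2 * x} (\<lambda>y. deriv f y * G a x y) = integral {0..x} (\<lambda>s. F s * Q a s)"
proof -
  have "((\<lambda>y. - (deriv f y * G a x y)) has_integral - integral {0..x} (\<lambda>s. F s * Q a s)) {0..2 * x}"
  proof (rule has_integral_punctured_limit_nonneg)
    show "x \<in> {0..2 * x}" using x_pos by simp
    show "0 \<le> - (deriv f y * G a x y)" if "y \<in> {0..2 * x}" "y \<noteq> x" for y
      using deriv_G_nonpos[OF that] by simp
    show "(\<lambda>y. - (deriv f y * G a x y)) integrable_on ({0..x - d} \<union> {x + d..2 * x})" if "0 < d" for d
    proof -
      have "{0..x - d} \<inter> {x + d..2 * x} = {}" using that by auto
      then show ?thesis using deriv_G_integrable_on[OF that] by (intro integrable_neg integrable_Un) auto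
    qed
    show "((\<lambda>d. integral ({0..x - d} \<union> {x + d..2 * x}) (\<lambda>y. - (deriv f y * G a x y)))
        \<longlongrightarrow> - integral {0..x} (\<lambda>s. F s * Q a s)) (at_right 0)"
      unfolding integral_neg by (intro tendsto_minus tendsto_integral_punctured_deriv_G)
  qed
  from has_integral_neg[OF this] show ?thesis by (simp add: integral_unique)
qed

end

theorem lemma4p5:
  fixes a :: real and f :: "real \<Rightarrow> real" and x :: real
  assumes "a > 0"
    and "smooth_periodic f"
    and "\<forall>t. f (- t) = f t"
    and "\<forall>t. f t \<ge> 0"
    and "f 0 = 0"
    and "\<forall>t\<in>{0..<pi}. deriv f t \<ge> 0"
    and "0 < x" and "x \<le> pi / 2"
  shows "H a f x \<le> integral {0..2 * x} (\<lambda>y. deriv f y * G a x y)"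
proof -
  have differentiable: "((deriv ^^ n) f) differentiable (at t)" for n t
    using assms(2) unfolding smooth_periodic_def smooth_fun_def by blast
  have bounded: "bounded (range ((deriv ^^ n) f))" for n
    using assms(2) unfolding smooth_periodic_def by blast
  interpret Ha_estimate a f x
  proof
    show "(f has_real_derivative deriv f t) (at t)" for t
      using differentiable[of 0 t] by (simp add: DERIV_deriv_iff_real_differentiable)
    show "isCont (deriv f) t" for t
      using differentiable[of 1 t] by (simp add: differentiable_imp_continuous_within)
    show "bounded (range f)" using bounded[of 0] by simp
    show "bounded (range (deriv f))" using bounded[of 1] by simp
  qed (use assms in \<open>auto simp: smooth_periodic_def\<close>)
  show ?thesis
    using H_eq_integral_FK integral_FK_le_integral_FQ integral_deriv_G_eq_integral_FQ by simp
qed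

end
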